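(* Let $u\in L^\infty([0,+\infty);W^{1,p}(\mathbb{T}^d;\mathbb{R}^d))$, $p\in(1,\infty)$, be divergence-free. Then the family \[\mathcal{N}_u:=\{D\in\mathcal{M}\mid \{\mathbbm{1}_D\circ\Phi_t^{-1}\}_{t\ge0}\text{ is precompact in }L^2(\mathbb{T}^d)\}\] is a $\sigma$-algebra on $\mathbb{T}^d$.
   Context: $\mathbb{T}^d$ ($d\ge2$) is the torus with Lebesgue measure $\mu$, and $\mathcal{M}$ is the $\sigma$-algebra of Lebesgue measurable subsets of $\mathbb{T}^d$. $\Phi_t$ denotes the DiPerna–Lions measure-preserving flow map of $u$ (for a.e. $x$, $t\mapsto\Phi_t(x)$ is the unique absolutely continuous solution of $\dot\gamma=u(t,\gamma)$, $\gamma(0)=x$), so that $\mathbbm{1}_D\circ\Phi_t^{-1}$ is the solution at time $t$ of the transport equation $\partial_t\rho+u\cdot\nabla\rho=0$ with initial datum $\mathbbm{1}_D$. *)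

theory Defs
  imports "HOL-Analysis.Analysis"
begin

text \<open>The torus T^d is modelled by the half-open unit cube [0,1)^d in real^'d,
  with (restricted) Lebesgue measure; periodic objects live on real^'d.\<close>

definition unit_cube :: "(real^'d) set" where
  "unit_cube = {x. \<forall>i. 0 \<le> x $ i \<and> x $ i < 1}"

definition torus_proj :: "real^'d \<Rightarrow> real^'d" where
  "torus_proj x = (\<chi> i. frac (x $ i))"

definition periodic_fun :: "(real^'d \<Rightarrow> 'b) \<Rightarrow> bool" where
  "periodic_fun f \<longleftrightarrow> (\<forall>x i. f (x + axis i 1) = f x)"

definition pderiv_j :: "(real^'d \<Rightarrow> real) \<Rightarrow> 'd \<Rightarrow> real^'d \<Rightarrow> real" where
  "pderiv_j \<phi> j x = frechet_derivative \<phi> (at x) (axis j 1)"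

definition test_fun :: "(real^'d \<Rightarrow> real) \<Rightarrow> bool" where
  "test_fun \<phi> \<longleftrightarrow> periodic_fun \<phi> \<and> (\<forall>x. \<phi> differentiable (at x))
     \<and> (\<forall>j. continuous_on UNIV (pderiv_j \<phi> j))"

definition weak_pderiv :: "(real^'d \<Rightarrow> real) \<Rightarrow> 'd \<Rightarrow> (real^'d \<Rightarrow> real) \<Rightarrow> bool" where
  "weak_pderiv f j G \<longleftrightarrow> (\<forall>\<phi>. test_fun \<phi> \<longrightarrow>
     integral unit_cube (\<lambda>x. f x * pderiv_j \<phi> j x) = - integral unit_cube (\<lambda>x. G x * \<phi> x))"

definition W1p_bounded :: "real \<Rightarrow> real \<Rightarrow> (real^'d \<Rightarrow> real^'d) \<Rightarrow> bool" where
  "W1p_bounded p M v \<longleftrightarrow> periodic_fun v \<and>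
     (\<forall>i. (\<lambda>x. v x $ i) \<in> borel_measurable (lebesgue_on unit_cube) \<and>
          (\<integral>\<^sup>+x. ennreal (\<bar>v x $ i\<bar> powr p) \<partial>lebesgue_on unit_cube) \<le> ennreal M) \<and>
     (\<forall>i j. \<exists>G. G \<in> borel_measurable (lebesgue_on unit_cube) \<and>
          (\<integral>\<^sup>+x. ennreal (\<bar>G x\<bar> powr p) \<partial>lebesgue_on unit_cube) \<le> ennreal M \<and>
          weak_pderiv (\<lambda>x. v x $ i) j G)"

definition Linf_W1p :: "real \<Rightarrow> (real \<Rightarrow> real^'d \<Rightarrow> real^'d) \<Rightarrow> bool" where
  "Linf_W1p p u \<longleftrightarrow> (\<forall>t. periodic_fun (u t)) \<and>
     case_prod u \<in> borel_measurable (lborel \<Otimes>\<^sub>M lborel) \<and>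
     (\<exists>M. AE t in lborel. t \<ge> 0 \<longrightarrow> W1p_bounded p M (u t))"

definition div_free :: "(real \<Rightarrow> real^'d \<Rightarrow> real^'d) \<Rightarrow> bool" where
  "div_free u \<longleftrightarrow> (AE t in lborel. t \<ge> 0 \<longrightarrow> (\<forall>\<phi>. test_fun \<phi> \<longrightarrow>
      integral unit_cube (\<lambda>x. \<Sum>i\<in>UNIV. u t x $ i * pderiv_j \<phi> i x) = 0))"

text \<open>gamma is an absolutely continuous solution (written in integral form, lifted to
  real^'d) of gamma' = u(t, gamma), gamma(0) = x on [0,\<infinity>).\<close>
definition ode_solution :: "(real \<Rightarrow> real^'d \<Rightarrow> real^'d) \<Rightarrow> real^'d \<Rightarrow> (real \<Rightarrow> real^'d) \<Rightarrow> bool" where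
  "ode_solution u x \<gamma> \<longleftrightarrow> \<gamma> 0 = x \<and>
     (\<forall>t\<ge>0. (\<lambda>s. u s (\<gamma> s)) absolutely_integrable_on {0..t} \<and>
             \<gamma> t = x + integral {0..t} (\<lambda>s. u s (\<gamma> s)))"

definition measure_preserving_map :: "'a measure \<Rightarrow> ('a \<Rightarrow> 'a) \<Rightarrow> bool" where
  "measure_preserving_map M f \<longleftrightarrow> f \<in> measurable M M \<and> distr M M f = M"

text \<open>X is the (lifted) DiPerna--Lions measure-preserving flow of u: the torus flow map
  is Phi_t = torus_proj o X t.\<close>
definition DL_flow :: "(real \<Rightarrow> real^'d \<Rightarrow> real^'d) \<Rightarrow> (real \<Rightarrow> real^'d \<Rightarrow> real^'d) \<Rightarrow> bool" where
  "DL_flow u X \<longleftrightarrow>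
     (AE x in lebesgue_on unit_cube. ode_solution u x (\<lambda>t. X t x) \<and>
        (\<forall>\<gamma>. ode_solution u x \<gamma> \<longrightarrow> (\<forall>t\<ge>0. \<gamma> t = X t x))) \<and>
     (\<forall>t\<ge>0. measure_preserving_map (lebesgue_on unit_cube) (\<lambda>x. torus_proj (X t x)) \<and>
        (\<exists>\<Psi>. measure_preserving_map (lebesgue_on unit_cube) \<Psi> \<and>
           (AE x in lebesgue_on unit_cube. \<Psi> (torus_proj (X t x)) = x) \<and>
           (AE y in lebesgue_on unit_cube. torus_proj (X t (\<Psi> y)) = y)))"

text \<open>g is (a representative of) 1_D o Phi_t^{-1}: the a.e.-unique measurable g with
  g o Phi_t = 1_D a.e.\<close>
definition transported :: "(real \<Rightarrow> real^'d \<Rightarrow> real^'d) \<Rightarrow> (real^'d) set \<Rightarrow> real \<Rightarrow> (real^'d \<Rightarrow> real) \<Rightarrow> bool" where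
  "transported X D t g \<longleftrightarrow> g \<in> borel_measurable (lebesgue_on unit_cube) \<and>
     (AE x in lebesgue_on unit_cube. g (torus_proj (X t x)) = indicator D x)"

definition precompact_L2 :: "(real^'d \<Rightarrow> real) set \<Rightarrow> bool" where
  "precompact_L2 F \<longleftrightarrow> (\<forall>f::nat \<Rightarrow> real^'d \<Rightarrow> real. (\<forall>n. f n \<in> F) \<longrightarrow>
     (\<exists>r h. strict_mono r \<and> h \<in> borel_measurable (lebesgue_on unit_cube) \<and>
        (\<integral>\<^sup>+x. ennreal ((h x)\<^sup>2) \<partial>lebesgue_on unit_cube) < \<infinity> \<and>
        (\<lambda>n. \<integral>\<^sup>+x. ennreal ((f (r n) x - h x)\<^sup>2) \<partial>lebesgue_on unit_cube) \<longlonglongrightarrow> 0))"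

definition N_family :: "(real \<Rightarrow> real^'d \<Rightarrow> real^'d) \<Rightarrow> (real^'d) set set" where
  "N_family X = {D. D \<in> sets (lebesgue_on unit_cube) \<and>
     precompact_L2 {g. \<exists>t\<ge>0. transported X D t g}}"

end

theory Submission
  imports Defs "HOL-Library.Diagonal_Subsequence"
begin

(* At a fixed time t, transport by the measure preserving flow is an isometry on indicators:
   the transported indicators of D and E are at squared L2 distance mu(D triangle E).
   Transported indicators are {0,1}-valued a.e., and for such functions squared L2 and L1
   distances coincide; by completeness, precompactness of the orbit of D therefore means that
   every sequence in it has an L2-Cauchy subsequence.  This property passes to complements
   (g |-> 1 - g is an isometry), to finite unions (max is 1-Lipschitz in each argument), and to
   countable unions: uniformly in t, the orbit of E_k = A_0 u ... u A_(k-1) approximates that of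
   D = U_i A_i within mu(D - E_k) -> 0, and a diagonal argument shows that a family uniformly
   approximable by families with the property has it too.
   The hypotheses on u serve only to produce the flow; the argument uses nothing but the fact
   that each Phi_t is measure preserving and a.e. invertible. *)

section \<open>Squared L2 distance and Cauchy subsequences\<close>

definition L2_sqdist :: "'a measure \<Rightarrow> ('a \<Rightarrow> real) \<Rightarrow> ('a \<Rightarrow> real) \<Rightarrow> ennreal" where
  "L2_sqdist M f g = (\<integral>\<^sup>+x. ennreal ((f x - g x)\<^sup>2) \<partial>M)"

definition L2_Cauchy :: "'a measure \<Rightarrow> (nat \<Rightarrow> 'a \<Rightarrow> real) \<Rightarrow> bool" where
  "L2_Cauchy M f \<longleftrightarrow> (\<forall>e>0. \<exists>N. \<forall>m\<ge>N. \<forall>n\<ge>N. L2_sqdist M (f m) (f n) \<le> ennreal e)"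

definition L2_Cauchy_subseqs :: "'a measure \<Rightarrow> ('a \<Rightarrow> real) set \<Rightarrow> bool" where
  "L2_Cauchy_subseqs M F \<longleftrightarrow> (\<forall>f :: nat \<Rightarrow> 'a \<Rightarrow> real. (\<forall>n. f n \<in> F) \<longrightarrow> (\<exists>r. strict_mono r \<and> L2_Cauchy M (f \<circ> r)))"

lemma L2_sqdist_commute: "L2_sqdist M f g = L2_sqdist M g f"
  unfolding L2_sqdist_def by (simp add: power2_commute)

lemma L2_sqdist_triangle:
  assumes [measurable]: "f \<in> borel_measurable M" "g \<in> borel_measurable M" "h \<in> borel_measurable M"
  shows "L2_sqdist M f h \<le> 2 * L2_sqdist M f g + 2 * L2_sqdist M g h"
proof -
  have "ennreal ((f x - h x)\<^sup>2) \<le> 2 * ennreal ((f x - g x)\<^sup>2) + 2 * ennreal ((g x - h x)\<^sup>2)" for x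
  proof -
    have "(f x - h x)\<^sup>2 \<le> 2 * (f x - g x)\<^sup>2 + 2 * (g x - h x)\<^sup>2"
      using zero_le_power2[of "(f x - g x) - (g x - h x)"] by (simp add: power2_eq_square algebra_simps)
    then have "ennreal ((f x - h x)\<^sup>2) \<le> ennreal (2 * (f x - g x)\<^sup>2 + 2 * (g x - h x)\<^sup>2)"
      by (rule ennreal_leI)
    then show ?thesis
      by (simp add: ennreal_plus ennreal_mult)
  qed
  then have "L2_sqdist M f h \<le> (\<integral>\<^sup>+x. 2 * ennreal ((f x - g x)\<^sup>2) + 2 * ennreal ((g x - h x)\<^sup>2) \<partial>M)"
    unfolding L2_sqdist_def by (intro nn_integral_mono)
  also have "\<dots> = 2 * L2_sqdist M f g + 2 * L2_sqdist M g h"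
    unfolding L2_sqdist_def by (simp add: nn_integral_add nn_integral_cmult)
  finally show ?thesis .
qed

lemma L2_sqdist_triangle4:
  assumes [measurable]: "f \<in> borel_measurable M" "f' \<in> borel_measurable M"
    "g \<in> borel_measurable M" "g' \<in> borel_measurable M"
  shows "L2_sqdist M f g \<le> 2 * L2_sqdist M f f' + 4 * L2_sqdist M f' g' + 4 * L2_sqdist M g' g"
proof -
  have "L2_sqdist M f g \<le> 2 * L2_sqdist M f f' + 2 * L2_sqdist M f' g"
    by (rule L2_sqdist_triangle) measurable
  also have "L2_sqdist M f' g \<le> 2 * L2_sqdist M f' g' + 2 * L2_sqdist M g' g"
    by (rule L2_sqdist_triangle) measurable
  finally show ?thesis
    by (simp add: distrib_left mult.assoc[symmetric] add.assoc mult_left_mono)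
qed

lemma L2_sqdist_max:
  assumes [measurable]: "f \<in> borel_measurable M" "g \<in> borel_measurable M"
    "f' \<in> borel_measurable M" "g' \<in> borel_measurable M"
  shows "L2_sqdist M (\<lambda>x. max (f x) (g x)) (\<lambda>x. max (f' x) (g' x)) \<le> L2_sqdist M f f' + L2_sqdist M g g'"
proof -
  have "(max a b - max c d)\<^sup>2 \<le> (a - c)\<^sup>2 + (b - d)\<^sup>2" for a b c d :: real
  proof -
    have "\<bar>max a b - max c d\<bar> \<le> max \<bar>a - c\<bar> \<bar>b - d\<bar>"
      by (auto simp: max_def abs_if)
    then have "(max a b - max c d)\<^sup>2 \<le> (max \<bar>a - c\<bar> \<bar>b - d\<bar>)\<^sup>2"
      by (metis abs_ge_zero power2_abs power_mono)
    also have "\<dots> \<le> (a - c)\<^sup>2 + (b - d)\<^sup>2"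
      by (auto simp: max_def)
    finally show ?thesis .
  qed
  then have "L2_sqdist M (\<lambda>x. max (f x) (g x)) (\<lambda>x. max (f' x) (g' x))
      \<le> (\<integral>\<^sup>+x. ennreal ((f x - f' x)\<^sup>2) + ennreal ((g x - g' x)\<^sup>2) \<partial>M)"
    unfolding L2_sqdist_def by (intro nn_integral_mono) (simp add: ennreal_leI flip: ennreal_plus)
  also have "\<dots> = L2_sqdist M f f' + L2_sqdist M g g'"
    unfolding L2_sqdist_def by (simp add: nn_integral_add)
  finally show ?thesis .
qed

lemma L2_Cauchy_subseq:
  assumes "L2_Cauchy M f" "strict_mono r"
  shows "L2_Cauchy M (f \<circ> r)"
  unfolding L2_Cauchy_def
proof (intro allI impI)
  fix e :: real assume "e > 0"
  with assms(1) obtain N where "\<And>m n. m \<ge> N \<Longrightarrow> n \<ge> N \<Longrightarrow> L2_sqdist M (f m) (f n) \<le> ennreal e"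
    unfolding L2_Cauchy_def by blast
  moreover have "n \<le> r n" for n
    using seq_suble[OF assms(2)] .
  ultimately show "\<exists>N. \<forall>m\<ge>N. \<forall>n\<ge>N. L2_sqdist M ((f \<circ> r) m) ((f \<circ> r) n) \<le> ennreal e"
    by (metis comp_apply order_trans)
qed

lemma L2_Cauchy_if_dominated:
  assumes "L2_Cauchy M f" "L2_Cauchy M g"
    and dom: "\<And>m n. L2_sqdist M (h m) (h n) \<le> L2_sqdist M (f m) (f n) + L2_sqdist M (g m) (g n)"
  shows "L2_Cauchy M h"
  unfolding L2_Cauchy_def
proof (intro allI impI)
  fix e :: real assume "e > 0"
  then have "e / 2 > 0" by simp
  with assms(1,2) obtain N1 N2 where
    N1: "\<And>m n. m \<ge> N1 \<Longrightarrow> n \<ge> N1 \<Longrightarrow> L2_sqdist M (f m) (f n) \<le> ennreal (e / 2)" and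
    N2: "\<And>m n. m \<ge> N2 \<Longrightarrow> n \<ge> N2 \<Longrightarrow> L2_sqdist M (g m) (g n) \<le> ennreal (e / 2)"
    unfolding L2_Cauchy_def by meson
  have "L2_sqdist M (h m) (h n) \<le> ennreal e" if "m \<ge> max N1 N2" "n \<ge> max N1 N2" for m n
  proof -
    have "L2_sqdist M (h m) (h n) \<le> ennreal (e / 2) + ennreal (e / 2)"
      using dom[of m n] N1[of m n] N2[of m n] that by (auto intro: order_trans add_mono)
    also have "\<dots> = ennreal e"
      using \<open>e > 0\<close> by (simp flip: ennreal_plus)
    finally show ?thesis .
  qed
  then show "\<exists>N. \<forall>m\<ge>N. \<forall>n\<ge>N. L2_sqdist M (h m) (h n) \<le> ennreal e"
    by blast
qed

lemma L2_Cauchy_offset: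
  assumes "L2_Cauchy M (\<lambda>n. f (k + n))"
  shows "L2_Cauchy M f"
  unfolding L2_Cauchy_def
proof (intro allI impI)
  fix e :: real assume "e > 0"
  with assms obtain N where N: "\<And>m n. m \<ge> N \<Longrightarrow> n \<ge> N \<Longrightarrow> L2_sqdist M (f (k + m)) (f (k + n)) \<le> ennreal e"
    unfolding L2_Cauchy_def by blast
  have "L2_sqdist M (f m) (f n) \<le> ennreal e" if "m \<ge> k + N" "n \<ge> k + N" for m n
    using N[of "m - k" "n - k"] that by simp
  then show "\<exists>N. \<forall>m\<ge>N. \<forall>n\<ge>N. L2_sqdist M (f m) (f n) \<le> ennreal e"
    by blast
qed

lemma L2_Cauchy_if_tendsto:
  assumes [measurable]: "\<And>n. f n \<in> borel_measurable M" "h \<in> borel_measurable M"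
    and lim: "(\<lambda>n. L2_sqdist M (f n) h) \<longlonglongrightarrow> 0"
  shows "L2_Cauchy M f"
  unfolding L2_Cauchy_def
proof (intro allI impI)
  fix e :: real assume "e > 0"
  then have "ennreal (e / 4) > 0" by simp
  from order_tendstoD(2)[OF lim this] obtain N where N: "\<And>n. n \<ge> N \<Longrightarrow> L2_sqdist M (f n) h < ennreal (e / 4)"
    by (auto simp: eventually_sequentially)
  have "L2_sqdist M (f m) (f n) \<le> ennreal e" if "m \<ge> N" "n \<ge> N" for m n
  proof -
    have "L2_sqdist M (f m) (f n) \<le> 2 * L2_sqdist M (f m) h + 2 * L2_sqdist M h (f n)"
      by (rule L2_sqdist_triangle) measurable
    also have "\<dots> \<le> 2 * ennreal (e / 4) + 2 * ennreal (e / 4)"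
      using N[OF that(1)] N[OF that(2)] by (intro add_mono mult_left_mono) (auto simp: L2_sqdist_commute)
    also have "\<dots> = ennreal e"
      using ennreal_mult'[of 4 "e / 4"] by (simp flip: distrib_right)
    finally show ?thesis .
  qed
  then show "\<exists>N. \<forall>m\<ge>N. \<forall>n\<ge>N. L2_sqdist M (f m) (f n) \<le> ennreal e"
    by blast
qed

lemma L1_dist_eq_L2_sqdist_01:
  assumes [measurable]: "f \<in> borel_measurable M" "g \<in> borel_measurable M"
    and f01: "AE x in M. f x \<in> {0, 1}" and g01: "AE x in M. g x \<in> {0, 1}"
  shows "(LINT x|M. norm (f x - g x)) = enn2real (L2_sqdist M f g)"
proof -
  have "(LINT x|M. norm (f x - g x)) = enn2real (\<integral>\<^sup>+x. ennreal (norm (f x - g x)) \<partial>M)"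
    by (rule integral_eq_nn_integral) auto
  also have "(\<integral>\<^sup>+x. ennreal (norm (f x - g x)) \<partial>M) = L2_sqdist M f g"
    unfolding L2_sqdist_def
  proof (rule nn_integral_cong_AE)
    from f01 g01 show "AE x in M. ennreal (norm (f x - g x)) = ennreal ((f x - g x)\<^sup>2)"
      by eventually_elim auto
  qed
  finally show ?thesis .
qed

lemma L2_sqdist_le_Liminf:
  assumes [measurable]: "f \<in> borel_measurable M" "\<And>m. g m \<in> borel_measurable M"
    and lim: "AE x in M. (\<lambda>m. g m x) \<longlonglongrightarrow> h x"
  shows "L2_sqdist M f h \<le> liminf (\<lambda>m. L2_sqdist M f (g m))"
proof -
  have "L2_sqdist M f h = (\<integral>\<^sup>+x. liminf (\<lambda>m. ennreal ((f x - g m x)\<^sup>2)) \<partial>M)"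
    unfolding L2_sqdist_def
  proof (rule nn_integral_cong_AE)
    from lim show "AE x in M. ennreal ((f x - h x)\<^sup>2) = liminf (\<lambda>m. ennreal ((f x - g m x)\<^sup>2))"
    proof eventually_elim
      case (elim x)
      then have "(\<lambda>m. ennreal ((f x - g m x)\<^sup>2)) \<longlonglongrightarrow> ennreal ((f x - h x)\<^sup>2)"
        by (intro tendsto_intros)
      then show ?case
        by (simp only: lim_imp_Liminf[OF sequentially_bot])
    qed
  qed
  also have "\<dots> \<le> liminf (\<lambda>m. L2_sqdist M f (g m))"
    unfolding L2_sqdist_def by (rule nn_integral_liminf) measurable
  finally show ?thesis .
qed

lemma L2_Cauchy_tendsto_AE_limit:
  assumes [measurable]: "\<And>n. f n \<in> borel_measurable M"
    and Cauchy: "L2_Cauchy M f" and lim: "AE x in M. (\<lambda>n. f n x) \<longlonglongrightarrow> h x"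
  shows "(\<lambda>n. L2_sqdist M (f n) h) \<longlonglongrightarrow> 0"
proof (rule tendsto_zero_ennreal)
  fix e :: real assume "0 < e"
  then obtain N where N: "\<And>m n. m \<ge> N \<Longrightarrow> n \<ge> N \<Longrightarrow> L2_sqdist M (f m) (f n) \<le> ennreal (e / 2)"
    using Cauchy unfolding L2_Cauchy_def by (meson half_gt_zero)
  have "L2_sqdist M (f n) h < ennreal e" if "n \<ge> N" for n
  proof -
    have "L2_sqdist M (f n) h \<le> liminf (\<lambda>m. L2_sqdist M (f n) (f m))"
      by (rule L2_sqdist_le_Liminf[OF _ _ lim]) measurable
    also have "\<dots> \<le> limsup (\<lambda>m. L2_sqdist M (f n) (f m))"
      by (rule Liminf_le_Limsup) simp
    also have "\<dots> \<le> ennreal (e / 2)"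
      using N that by (intro Limsup_bounded) (auto simp: eventually_sequentially)
    also have "\<dots> < ennreal e"
      using \<open>0 < e\<close> by (simp add: ennreal_lessI)
    finally show ?thesis .
  qed
  then show "\<forall>\<^sub>F n in sequentially. L2_sqdist M (f n) h < ennreal e"
    by (auto simp: eventually_sequentially)
qed

lemma L1_Cauchy_if_L2_Cauchy_01:
  assumes [measurable]: "\<And>n. f n \<in> borel_measurable M"
    and f01: "\<And>n. AE x in M. f n x \<in> {0, 1}"
    and Cauchy: "L2_Cauchy M f" and "e > 0"
  shows "\<exists>N. \<forall>i\<ge>N. \<forall>j\<ge>N. (LINT x|M. norm (f i x - f j x)) < e"
proof -
  obtain N where N: "\<And>i j. i \<ge> N \<Longrightarrow> j \<ge> N \<Longrightarrow> L2_sqdist M (f i) (f j) \<le> ennreal (e / 2)"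
    using Cauchy \<open>e > 0\<close> unfolding L2_Cauchy_def by (meson half_gt_zero)
  have "(LINT x|M. norm (f i x - f j x)) < e" if "i \<ge> N" "j \<ge> N" for i j
  proof -
    have "(LINT x|M. norm (f i x - f j x)) = enn2real (L2_sqdist M (f i) (f j))"
      by (rule L1_dist_eq_L2_sqdist_01[OF _ _ f01 f01]) measurable
    also have "\<dots> \<le> e / 2"
      using N[OF that] \<open>e > 0\<close> by (intro enn2real_leI) auto
    finally show ?thesis
      using \<open>e > 0\<close> by linarith
  qed
  then show ?thesis
    by blast
qed

lemma L2_Cauchy_01_convergent_subseq:
  assumes M: "finite_measure M"
    and [measurable]: "\<And>n. f n \<in> borel_measurable M"
    and f01: "\<And>n. AE x in M. f n x \<in> {0, 1}"
    and Cauchy: "L2_Cauchy M f"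
  obtains r h where "strict_mono r" "h \<in> borel_measurable M" "(\<integral>\<^sup>+x. ennreal ((h x)\<^sup>2) \<partial>M) < \<infinity>"
    "(\<lambda>n. L2_sqdist M (f (r n)) h) \<longlonglongrightarrow> 0"
proof -
  have integrable: "integrable M (f n)" for n
    using f01[of n] by (intro finite_measure.integrable_const_bound[OF M, of _ 1]) (auto elim!: eventually_mono)
  obtain r where r: "strict_mono r" and "AE x in M. Cauchy (\<lambda>i. f (r i) x)"
    by (rule cauchy_L1_AE_cauchy_subseq[where M = M and s = f])
      (use integrable L1_Cauchy_if_L2_Cauchy_01[OF _ f01 Cauchy] in auto)
  define h where "h x = lim (\<lambda>i. f (r i) x)" for x
  have lim: "AE x in M. (\<lambda>i. f (r i) x) \<longlonglongrightarrow> h x"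
    using \<open>AE x in M. Cauchy _\<close>
    by eventually_elim (simp add: h_def Cauchy_convergent_iff convergent_LIMSEQ_iff)
  have h_meas: "h \<in> borel_measurable M"
    unfolding h_def by measurable
  have "AE x in M. \<forall>n. f n x \<in> {0, 1}"
    using f01 by (simp add: AE_all_countable)
  with lim have "AE x in M. ennreal ((h x)\<^sup>2) \<le> 1"
  proof eventually_elim
    case (elim x)
    have "\<bar>h x\<bar> \<le> 1"
    proof (rule LIMSEQ_le_const2[OF tendsto_rabs[OF elim(1)]])
      have "\<bar>f n x\<bar> \<le> 1" for n
        using elim(2)[rule_format, of n] by auto
      then show "\<exists>N. \<forall>n\<ge>N. \<bar>f (r n) x\<bar> \<le> 1"
        by blast
    qed
    then show ?case
      by (simp add: abs_square_le_1)
  qed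
  then have "(\<integral>\<^sup>+x. ennreal ((h x)\<^sup>2) \<partial>M) \<le> emeasure M (space M)"
    by (simp add: nn_integral_mono_AE[where v = "\<lambda>_. 1", simplified])
  also have "\<dots> < \<infinity>"
    using finite_measure.emeasure_finite[OF M] by (simp add: less_top)
  finally have "(\<integral>\<^sup>+x. ennreal ((h x)\<^sup>2) \<partial>M) < \<infinity>" .
  moreover have "(\<lambda>n. L2_sqdist M (f (r n)) h) \<longlonglongrightarrow> 0"
    using L2_Cauchy_subseq[OF Cauchy r] lim by (intro L2_Cauchy_tendsto_AE_limit) (auto simp: o_def)
  ultimately show ?thesis
    using that r h_meas by blast
qed

lemma L2_Cauchy_uniform_limit:
  assumes f_meas: "\<And>n. f n \<in> borel_measurable M" and g_meas: "\<And>k n. g k n \<in> borel_measurable M"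
    and g: "\<And>k. L2_Cauchy M (g k)"
    and approx: "\<And>k n. L2_sqdist M (f n) (g k n) \<le> \<epsilon> k"
    and \<epsilon>: "\<epsilon> \<longlonglongrightarrow> 0"
  shows "L2_Cauchy M f"
  unfolding L2_Cauchy_def
proof (intro allI impI)
  fix e :: real assume "e > 0"
  define d where "d = e / 10"
  have "d > 0"
    using \<open>e > 0\<close> by (simp add: d_def)
  then have "\<forall>\<^sub>F k in sequentially. \<epsilon> k < ennreal d"
    by (intro order_tendstoD(2)[OF \<epsilon>]) simp
  then obtain k where k: "\<epsilon> k \<le> ennreal d"
    by (meson eventually_sequentially le_refl less_imp_le)
  obtain N where N: "\<And>m n. m \<ge> N \<Longrightarrow> n \<ge> N \<Longrightarrow> L2_sqdist M (g k m) (g k n) \<le> ennreal d"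
    using g[of k] \<open>d > 0\<close> unfolding L2_Cauchy_def by meson
  have "L2_sqdist M (f m) (f n) \<le> ennreal e" if "m \<ge> N" "n \<ge> N" for m n
  proof -
    have "L2_sqdist M (f m) (f n)
        \<le> 2 * L2_sqdist M (f m) (g k m) + 4 * L2_sqdist M (g k m) (g k n) + 4 * L2_sqdist M (g k n) (f n)"
      by (rule L2_sqdist_triangle4) (use f_meas g_meas in auto)
    also have "\<dots> \<le> 2 * ennreal d + 4 * ennreal d + 4 * ennreal d"
    proof (intro add_mono mult_left_mono N that zero_le)
      show "L2_sqdist M (f m) (g k m) \<le> ennreal d"
        using approx k by (rule order_trans)
      show "L2_sqdist M (g k n) (f n) \<le> ennreal d"
        using approx k unfolding L2_sqdist_commute[of M "g k n"] by (rule order_trans)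
    qed
    also have "\<dots> = ennreal e"
      using ennreal_mult'[of 10 d] \<open>d > 0\<close> by (simp add: d_def flip: distrib_right)
    finally show ?thesis .
  qed
  then show "\<exists>N. \<forall>m\<ge>N. \<forall>n\<ge>N. L2_sqdist M (f m) (f n) \<le> ennreal e"
    by blast
qed

lemma L2_Cauchy_subseqs_approx:
  assumes F_meas: "\<And>f. f \<in> F \<Longrightarrow> f \<in> borel_measurable M"
    and G_meas: "\<And>k g. g \<in> G k \<Longrightarrow> g \<in> borel_measurable M"
    and G: "\<And>k. L2_Cauchy_subseqs M (G k)"
    and approx: "\<And>f k. f \<in> F \<Longrightarrow> \<exists>g\<in>G k. L2_sqdist M f g \<le> \<epsilon> k"
    and \<epsilon>: "\<epsilon> \<longlonglongrightarrow> 0"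
  shows "L2_Cauchy_subseqs M F"
  unfolding L2_Cauchy_subseqs_def
proof (intro allI impI)
  fix f :: "nat \<Rightarrow> 'a \<Rightarrow> real" assume f: "\<forall>n. f n \<in> F"
  have "\<forall>k n. \<exists>g. g \<in> G k \<and> L2_sqdist M (f n) g \<le> \<epsilon> k"
    using approx f by blast
  then obtain g :: "nat \<Rightarrow> nat \<Rightarrow> 'a \<Rightarrow> real" where g: "\<And>k n. g k n \<in> G k" "\<And>k n. L2_sqdist M (f n) (g k n) \<le> \<epsilon> k"
    by (simp only: choice_iff) blast
  define P where "P k s \<longleftrightarrow> L2_Cauchy M (g k \<circ> s)" for k and s :: "nat \<Rightarrow> nat"
  interpret subseqs P
  proof
    fix k and s :: "nat \<Rightarrow> nat"
    have "\<forall>n. (g k \<circ> s) n \<in> G k"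
      using g(1) by simp
    then have "\<exists>r. strict_mono r \<and> L2_Cauchy M ((g k \<circ> s) \<circ> r)"
      using G[of k] unfolding L2_Cauchy_subseqs_def by blast
    then show "\<exists>r. strict_mono r \<and> P k (s \<circ> r)"
      by (simp only: P_def o_assoc)
  qed
  have "P k (diagseq \<circ> (+) (Suc k))" for k
    by (rule diagseq_holds) (metis P_def L2_Cauchy_subseq o_assoc)
  then have diag: "L2_Cauchy M (g k \<circ> diagseq)" for k
    using L2_Cauchy_offset[where k = "Suc k" and f = "g k \<circ> diagseq"] by (simp add: P_def comp_def)
  have "L2_Cauchy M (f \<circ> diagseq)"
  proof (rule L2_Cauchy_uniform_limit[OF _ _ diag _ \<epsilon>])
    show "L2_sqdist M ((f \<circ> diagseq) n) ((g k \<circ> diagseq) n) \<le> \<epsilon> k" for k n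
      using g(2) by simp
  qed (use F_meas G_meas f g(1) in auto)
  then show "\<exists>r. strict_mono r \<and> L2_Cauchy M (f \<circ> r)"
    using subseq_diagseq by blast
qed

lemma L2_Cauchy_subseqs_image:
  assumes F: "L2_Cauchy_subseqs M F"
    and contraction: "\<And>f g. f \<in> F \<Longrightarrow> g \<in> F \<Longrightarrow> L2_sqdist M (\<phi> f) (\<phi> g) \<le> L2_sqdist M f g"
  shows "L2_Cauchy_subseqs M (\<phi> ` F)"
  unfolding L2_Cauchy_subseqs_def
proof (intro allI impI)
  fix h :: "nat \<Rightarrow> 'a \<Rightarrow> real" assume "\<forall>n. h n \<in> \<phi> ` F"
  then have "\<forall>n. \<exists>f. f \<in> F \<and> h n = \<phi> f"
    by blast
  then obtain f :: "nat \<Rightarrow> 'a \<Rightarrow> real" where f: "\<And>n. f n \<in> F" and h: "\<And>n. h n = \<phi> (f n)"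
    by (simp only: choice_iff) blast
  with F obtain r where r: "strict_mono r" and Cauchy: "L2_Cauchy M (f \<circ> r)"
    unfolding L2_Cauchy_subseqs_def by blast
  have "L2_Cauchy M (h \<circ> r)"
    by (rule L2_Cauchy_if_dominated[OF Cauchy Cauchy]) (simp add: h contraction f add_increasing2)
  then show "\<exists>r. strict_mono r \<and> L2_Cauchy M (h \<circ> r)"
    using r by blast
qed

lemma L2_Cauchy_subseqs_max:
  assumes F_meas: "\<And>f. f \<in> F \<Longrightarrow> f \<in> borel_measurable M"
    and G_meas: "\<And>g. g \<in> G \<Longrightarrow> g \<in> borel_measurable M"
    and F: "L2_Cauchy_subseqs M F" and G: "L2_Cauchy_subseqs M G"
  shows "L2_Cauchy_subseqs M {\<lambda>x. max (f x) (g x) | f g. f \<in> F \<and> g \<in> G}"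
  unfolding L2_Cauchy_subseqs_def
proof (intro allI impI)
  fix h :: "nat \<Rightarrow> 'a \<Rightarrow> real" assume "\<forall>n. h n \<in> {\<lambda>x. max (f x) (g x) | f g. f \<in> F \<and> g \<in> G}"
  then have "\<forall>n. \<exists>f g. f \<in> F \<and> g \<in> G \<and> h n = (\<lambda>x. max (f x) (g x))"
    by blast
  then obtain f g :: "nat \<Rightarrow> 'a \<Rightarrow> real" where f: "\<And>n. f n \<in> F" and g: "\<And>n. g n \<in> G"
    and h: "\<And>n. h n = (\<lambda>x. max (f n x) (g n x))"
    by (simp only: choice_iff) blast
  from F f obtain r1 where r1: "strict_mono r1" and f_Cauchy: "L2_Cauchy M (f \<circ> r1)"
    unfolding L2_Cauchy_subseqs_def by blast
  obtain r2 where r2: "strict_mono r2" and g_Cauchy: "L2_Cauchy M (g \<circ> r1 \<circ> r2)"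
    using G g unfolding L2_Cauchy_subseqs_def by (metis comp_apply)
  have "L2_Cauchy M (f \<circ> r1 \<circ> r2)"
    using f_Cauchy r2 by (rule L2_Cauchy_subseq)
  then have "L2_Cauchy M (h \<circ> (r1 \<circ> r2))"
  proof (rule L2_Cauchy_if_dominated)
    show "L2_Cauchy M (g \<circ> r1 \<circ> r2)"
      by (fact g_Cauchy)
    show "L2_sqdist M ((h \<circ> (r1 \<circ> r2)) m) ((h \<circ> (r1 \<circ> r2)) n)
        \<le> L2_sqdist M ((f \<circ> r1 \<circ> r2) m) ((f \<circ> r1 \<circ> r2) n) + L2_sqdist M ((g \<circ> r1 \<circ> r2) m) ((g \<circ> r1 \<circ> r2) n)"
      for m n
      unfolding h comp_apply by (rule L2_sqdist_max) (auto intro: F_meas G_meas f g)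
  qed
  then show "\<exists>r. strict_mono r \<and> L2_Cauchy M (h \<circ> r)"
    using r1 r2 strict_mono_o by blast
qed

section \<open>L2 on the torus and transport by the flow\<close>

abbreviation torus_measure :: "(real^'d) measure" where
  "torus_measure \<equiv> lebesgue_on unit_cube"

lemma finite_measure_torus: "finite_measure torus_measure"
proof -
  have "unit_cube \<subseteq> cbox (0 :: real^'d) (\<chi> i. 1)"
    by (auto simp: unit_cube_def mem_box_cart less_imp_le)
  moreover have "unit_cube \<in> sets (borel :: (real^'d) measure)"
    unfolding unit_cube_def by measurable
  ultimately have "unit_cube \<in> lmeasurable"
    by (intro bounded_set_imp_lmeasurable bounded_subset[OF bounded_cbox]) (auto intro: sets_completionI_sets)
  then show ?thesis
    by (rule finite_measure_lebesgue_on)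
qed

lemma precompact_L2_iff_L2_Cauchy_subseqs:
  fixes F :: "(real^'d \<Rightarrow> real) set"
  assumes meas: "\<And>f. f \<in> F \<Longrightarrow> f \<in> borel_measurable torus_measure"
    and F01: "\<And>f. f \<in> F \<Longrightarrow> AE x in torus_measure. f x \<in> {0, 1}"
  shows "precompact_L2 F \<longleftrightarrow> L2_Cauchy_subseqs torus_measure F"
proof
  assume F: "precompact_L2 F"
  show "L2_Cauchy_subseqs torus_measure F"
    unfolding L2_Cauchy_subseqs_def
  proof (intro allI impI)
    fix f :: "nat \<Rightarrow> real^'d \<Rightarrow> real" assume f: "\<forall>n. f n \<in> F"
    with F obtain r h where r: "strict_mono r" and "h \<in> borel_measurable torus_measure"
      and "(\<lambda>n. L2_sqdist torus_measure (f (r n)) h) \<longlonglongrightarrow> 0"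
      unfolding precompact_L2_def L2_sqdist_def by blast
    then have "L2_Cauchy torus_measure (f \<circ> r)"
      using meas f by (intro L2_Cauchy_if_tendsto) auto
    with r show "\<exists>r. strict_mono r \<and> L2_Cauchy torus_measure (f \<circ> r)"
      by blast
  qed
next
  assume F: "L2_Cauchy_subseqs torus_measure F"
  show "precompact_L2 F"
    unfolding precompact_L2_def
  proof (intro allI impI)
    fix f :: "nat \<Rightarrow> real^'d \<Rightarrow> real" assume f: "\<forall>n. f n \<in> F"
    with F obtain r1 where r1: "strict_mono r1" and "L2_Cauchy torus_measure (f \<circ> r1)"
      unfolding L2_Cauchy_subseqs_def by blast
    then obtain r2 h where "strict_mono r2" "h \<in> borel_measurable torus_measure"
      "(\<integral>\<^sup>+x. ennreal ((h x)\<^sup>2) \<partial>torus_measure) < \<infinity>"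
      "(\<lambda>n. L2_sqdist torus_measure ((f \<circ> r1) (r2 n)) h) \<longlonglongrightarrow> 0"
      using finite_measure_torus meas F01 f by (elim L2_Cauchy_01_convergent_subseq) auto
    with r1 show "\<exists>r h. strict_mono r \<and> h \<in> borel_measurable torus_measure \<and>
        (\<integral>\<^sup>+x. ennreal ((h x)\<^sup>2) \<partial>torus_measure) < \<infinity> \<and>
        (\<lambda>n. \<integral>\<^sup>+x. ennreal ((f (r n) x - h x)\<^sup>2) \<partial>torus_measure) \<longlonglongrightarrow> 0"
      unfolding L2_sqdist_def by (intro exI[of _ "r1 \<circ> r2"] exI[of _ h]) (auto intro: strict_mono_o)
  qed
qed

lemma nn_integral_measure_preserving:
  assumes "measure_preserving_map M \<phi>" "F \<in> borel_measurable M"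
  shows "(\<integral>\<^sup>+y. F y \<partial>M) = (\<integral>\<^sup>+x. F (\<phi> x) \<partial>M)"
proof -
  have \<phi>: "\<phi> \<in> measurable M M" and distr: "distr M M \<phi> = M"
    using assms(1) unfolding measure_preserving_map_def by auto
  have "(\<integral>\<^sup>+y. F y \<partial>M) = (\<integral>\<^sup>+y. F y \<partial>distr M M \<phi>)"
    by (simp only: distr)
  also have "\<dots> = (\<integral>\<^sup>+x. F (\<phi> x) \<partial>M)"
    using assms(2) by (intro nn_integral_distr[OF \<phi>]) (simp only: distr)
  finally show ?thesis .
qed

lemma AE_measure_preserving:
  assumes "measure_preserving_map M \<phi>" "{x \<in> space M. P x} \<in> sets M" "AE x in M. P (\<phi> x)"
  shows "AE y in M. P y"
proof -
  have \<phi>: "\<phi> \<in> measurable M M" and distr: "distr M M \<phi> = M"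
    using assms(1) unfolding measure_preserving_map_def by auto
  have "AE y in distr M M \<phi>. P y"
    using assms(2,3) by (subst AE_distr_iff[OF \<phi>]) auto
  then show ?thesis
    by (simp only: distr)
qed

lemma DL_flow_measure_preserving:
  "DL_flow u X \<Longrightarrow> t \<ge> 0 \<Longrightarrow> measure_preserving_map torus_measure (\<lambda>x. torus_proj (X t x))"
  unfolding DL_flow_def by blast

lemma transported_measurable: "transported X D t g \<Longrightarrow> g \<in> borel_measurable torus_measure"
  unfolding transported_def by blast

lemma transported_exists:
  assumes "DL_flow u X" "t \<ge> 0" "D \<in> sets torus_measure"
  obtains g where "transported X D t g"
proof -
  obtain \<Psi> where \<Psi>: "measure_preserving_map torus_measure \<Psi>"
    and inverse: "AE x in torus_measure. \<Psi> (torus_proj (X t x)) = x"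
    using assms(1,2) unfolding DL_flow_def by blast
  have [measurable]: "\<Psi> \<in> torus_measure \<rightarrow>\<^sub>M torus_measure" "D \<in> sets torus_measure"
    using \<Psi> assms(3) unfolding measure_preserving_map_def by auto
  have "(\<lambda>y. indicator D (\<Psi> y) :: real) \<in> borel_measurable torus_measure"
    by measurable
  with inverse have "transported X D t (\<lambda>y. indicator D (\<Psi> y))"
    unfolding transported_def by (auto elim: eventually_mono)
  then show ?thesis ..
qed

lemma transported_AE_01:
  assumes "DL_flow u X" "t \<ge> 0" "transported X D t g"
  shows "AE y in torus_measure. g y \<in> {0, 1}"
proof (rule AE_measure_preserving[OF DL_flow_measure_preserving[OF assms(1,2)]])
  have [measurable]: "g \<in> borel_measurable torus_measure"
    using assms(3) by (rule transported_measurable)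
  show "{y \<in> space torus_measure. g y \<in> {0, 1}} \<in> sets torus_measure"
    by measurable
  have "AE x in torus_measure. g (torus_proj (X t x)) = indicator D x"
    using assms(3) unfolding transported_def by blast
  then show "AE x in torus_measure. g (torus_proj (X t x)) \<in> {0, 1}"
    by eventually_elim (simp add: indicator_def)
qed

lemma L2_sqdist_transported:
  assumes "DL_flow u X" "t \<ge> 0" and g: "transported X D t g" and g': "transported X E t g'"
    and "D \<in> sets torus_measure" "E \<in> sets torus_measure"
  shows "L2_sqdist torus_measure g g' = emeasure torus_measure (sym_diff D E)"
proof -
  have [measurable]: "g \<in> borel_measurable torus_measure" "g' \<in> borel_measurable torus_measure"
    using g g' by (auto intro: transported_measurable)
  have "L2_sqdist torus_measure g g'
      = (\<integral>\<^sup>+x. ennreal ((g (torus_proj (X t x)) - g' (torus_proj (X t x)))\<^sup>2) \<partial>torus_measure)"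
    unfolding L2_sqdist_def
    by (rule nn_integral_measure_preserving[OF DL_flow_measure_preserving[OF assms(1,2)]]) measurable
  also have "\<dots> = (\<integral>\<^sup>+x. indicator (sym_diff D E) x \<partial>torus_measure)"
  proof (rule nn_integral_cong_AE)
    have "AE x in torus_measure. g (torus_proj (X t x)) = indicator D x"
      "AE x in torus_measure. g' (torus_proj (X t x)) = indicator E x"
      using g g' unfolding transported_def by blast+
    then show "AE x in torus_measure. ennreal ((g (torus_proj (X t x)) - g' (torus_proj (X t x)))\<^sup>2)
        = indicator (sym_diff D E) x"
      by eventually_elim (simp add: indicator_def)
  qed
  also have "\<dots> = emeasure torus_measure (sym_diff D E)"
    using assms(5,6) by (intro nn_integral_indicator) auto
  finally show ?thesis .
qed

lemma transported_compl:
  assumes "transported X D t g"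
  shows "transported X (unit_cube - D) t (\<lambda>x. 1 - g x)"
proof -
  have [measurable]: "g \<in> borel_measurable torus_measure"
    using assms by (rule transported_measurable)
  have "AE x in torus_measure. x \<in> unit_cube"
    using AE_space[of torus_measure] by simp
  moreover have "AE x in torus_measure. g (torus_proj (X t x)) = indicator D x"
    using assms unfolding transported_def by blast
  ultimately have "AE x in torus_measure. 1 - g (torus_proj (X t x)) = indicator (unit_cube - D) x"
    by eventually_elim (simp add: indicator_def)
  then show ?thesis
    unfolding transported_def by simp
qed

lemma transported_Un:
  assumes a: "transported X A t a" and b: "transported X B t b"
  shows "transported X (A \<union> B) t (\<lambda>x. max (a x) (b x))"
proof -
  have [measurable]: "a \<in> borel_measurable torus_measure" "b \<in> borel_measurable torus_measure"
    using a b by (auto intro: transported_measurable)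
  have "AE x in torus_measure. a (torus_proj (X t x)) = indicator A x"
    "AE x in torus_measure. b (torus_proj (X t x)) = indicator B x"
    using a b unfolding transported_def by blast+
  then have "AE x in torus_measure. max (a (torus_proj (X t x))) (b (torus_proj (X t x))) = indicator (A \<union> B) x"
    by eventually_elim (simp add: indicator_def)
  then show ?thesis
    unfolding transported_def by simp
qed

section \<open>Closure properties of the family\<close>

abbreviation transported_family :: "(real \<Rightarrow> real^'d \<Rightarrow> real^'d) \<Rightarrow> (real^'d) set \<Rightarrow> (real^'d \<Rightarrow> real) set" where
  "transported_family X D \<equiv> {g. \<exists>t\<ge>0. transported X D t g}"

lemma N_family_iff:
  assumes "DL_flow u X"
  shows "D \<in> N_family X \<longleftrightarrow>
    D \<in> sets torus_measure \<and> L2_Cauchy_subseqs torus_measure (transported_family X D)"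
proof -
  have "precompact_L2 (transported_family X D) \<longleftrightarrow> L2_Cauchy_subseqs torus_measure (transported_family X D)"
    using assms transported_measurable transported_AE_01 by (intro precompact_L2_iff_L2_Cauchy_subseqs) blast+
  then show ?thesis
    unfolding N_family_def by blast
qed

lemma N_family_sets: "D \<in> N_family X \<Longrightarrow> D \<in> sets torus_measure"
  unfolding N_family_def by blast

lemma N_family_empty:
  assumes DL: "DL_flow u X"
  shows "{} \<in> N_family X"
proof -
  have "L2_Cauchy_subseqs torus_measure (transported_family X {})"
  proof (rule L2_Cauchy_subseqs_approx[where G = "\<lambda>_. {\<lambda>_. 0}" and \<epsilon> = "\<lambda>_. 0"])
    show "L2_Cauchy_subseqs torus_measure {\<lambda>_. 0}"
      unfolding L2_Cauchy_subseqs_def L2_Cauchy_def L2_sqdist_def by (auto intro!: exI[of _ id] simp: strict_mono_def)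
    show "\<exists>g\<in>{\<lambda>_. 0}. L2_sqdist torus_measure f g \<le> 0" if "f \<in> transported_family X {}" for f
    proof -
      from that obtain t where "t \<ge> 0" "transported X {} t f"
        by blast
      moreover have "transported X {} t (\<lambda>_. 0)"
        unfolding transported_def by simp
      ultimately show ?thesis
        using L2_sqdist_transported[OF DL] by fastforce
    qed
  qed (auto intro: transported_measurable)
  then show ?thesis
    using N_family_iff[OF DL] by simp
qed

lemma N_family_compl:
  assumes DL: "DL_flow u X" and D: "D \<in> N_family X"
  shows "unit_cube - D \<in> N_family X"
proof -
  have D_sets: "D \<in> sets torus_measure" and Cauchy: "L2_Cauchy_subseqs torus_measure (transported_family X D)"
    using D N_family_iff[OF DL] by auto
  let ?\<phi> = "\<lambda>g x. 1 - g x"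
  have "transported_family X (unit_cube - D) \<subseteq> ?\<phi> ` transported_family X D"
  proof
    fix g assume "g \<in> transported_family X (unit_cube - D)"
    then obtain t where "t \<ge> 0" "transported X (unit_cube - D) t g"
      by blast
    moreover have "unit_cube - (unit_cube - D) = D"
      using sets.sets_into_space[OF D_sets] by auto
    ultimately have "?\<phi> g \<in> transported_family X D"
      using transported_compl[of X "unit_cube - D" t g] by auto
    then show "g \<in> ?\<phi> ` transported_family X D"
      by (rule rev_image_eqI) simp
  qed
  moreover have "L2_Cauchy_subseqs torus_measure (?\<phi> ` transported_family X D)"
    using Cauchy by (rule L2_Cauchy_subseqs_image) (simp add: L2_sqdist_def power2_commute)
  ultimately have "L2_Cauchy_subseqs torus_measure (transported_family X (unit_cube - D))"
    unfolding L2_Cauchy_subseqs_def by blast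
  moreover have "unit_cube - D \<in> sets torus_measure"
    using sets.compl_sets[OF D_sets] by simp
  ultimately show ?thesis
    using N_family_iff[OF DL] by blast
qed

lemma N_family_Un:
  assumes DL: "DL_flow u X" and A: "A \<in> N_family X" and B: "B \<in> N_family X"
  shows "A \<union> B \<in> N_family X"
proof -
  have A_sets: "A \<in> sets torus_measure" and B_sets: "B \<in> sets torus_measure"
    and A_Cauchy: "L2_Cauchy_subseqs torus_measure (transported_family X A)"
    and B_Cauchy: "L2_Cauchy_subseqs torus_measure (transported_family X B)"
    using A B N_family_iff[OF DL] by auto
  let ?max = "{\<lambda>x. max (a x) (b x) | a b. a \<in> transported_family X A \<and> b \<in> transported_family X B}"
  have "L2_Cauchy_subseqs torus_measure (transported_family X (A \<union> B))"
  proof (rule L2_Cauchy_subseqs_approx[where G = "\<lambda>_. ?max" and \<epsilon> = "\<lambda>_. 0"])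
    show "L2_Cauchy_subseqs torus_measure ?max"
      using A_Cauchy B_Cauchy by (intro L2_Cauchy_subseqs_max) (auto intro: transported_measurable)
    show "\<exists>g\<in>?max. L2_sqdist torus_measure f g \<le> 0" if "f \<in> transported_family X (A \<union> B)" for f
    proof -
      from that obtain t where t: "t \<ge> 0" and f: "transported X (A \<union> B) t f"
        by blast
      obtain a where a: "transported X A t a"
        using transported_exists[OF DL t A_sets] .
      obtain b where b: "transported X B t b"
        using transported_exists[OF DL t B_sets] .
      have "(\<lambda>x. max (a x) (b x)) \<in> ?max"
        using t a b by blast
      moreover have "L2_sqdist torus_measure f (\<lambda>x. max (a x) (b x)) = 0"
        using L2_sqdist_transported[OF DL t f transported_Un[OF a b]] A_sets B_sets by simp
      ultimately show ?thesis
        by (intro bexI[where x = "\<lambda>x. max (a x) (b x)"]) simp_all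
    qed
  qed (auto intro!: borel_measurable_max intro: transported_measurable)
  then show ?thesis
    using A_sets B_sets N_family_iff[OF DL] by simp
qed

lemma tendsto_emeasure_Diff_UN_lessThan:
  assumes "finite_measure M" and A: "range A \<subseteq> sets M"
  shows "(\<lambda>k. emeasure M ((\<Union>i. A i) - (\<Union>i<k. A i))) \<longlonglongrightarrow> 0"
proof -
  have "(\<lambda>k. emeasure M ((\<Union>i. A i) - (\<Union>i<k. A i))) \<longlonglongrightarrow> emeasure M (\<Inter>k. (\<Union>i. A i) - (\<Union>i<k. A i))"
  proof (rule Lim_emeasure_decseq)
    show "decseq (\<lambda>k. (\<Union>i. A i) - (\<Union>i<k. A i))"
      by (auto simp: decseq_def)
    show "emeasure M ((\<Union>i. A i) - (\<Union>i<k. A i)) \<noteq> \<infinity>" for k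
      using finite_measure.emeasure_finite[OF assms(1)] by simp
  qed (use A in auto)
  moreover have "(\<Inter>k. (\<Union>i. A i) - (\<Union>i<k. A i)) = {}"
    by blast
  ultimately show ?thesis
    by (simp only: emeasure_empty)
qed

lemma N_family_UN_lessThan:
  fixes A :: "nat \<Rightarrow> (real^'d) set"
  assumes DL: "DL_flow u X" and A: "\<And>i. A i \<in> N_family X"
  shows "(\<Union>i<k. A i) \<in> N_family X"
proof (induction k)
  case 0
  show ?case
    using N_family_empty[OF DL] by simp
next
  case (Suc k)
  then show ?case
    using N_family_Un[OF DL Suc A] by (simp add: lessThan_Suc Un_commute)
qed

lemma N_family_UN:
  fixes A :: "nat \<Rightarrow> (real^'d) set"
  assumes DL: "DL_flow u X" and A: "\<And>i. A i \<in> N_family X"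
  shows "(\<Union>i. A i) \<in> N_family X"
proof -
  define D where "D = (\<Union>i. A i)"
  define E where "E k = (\<Union>i<k. A i)" for k
  have E: "E k \<in> N_family X" for k
    unfolding E_def using DL A by (rule N_family_UN_lessThan)
  have E_sets: "E k \<in> sets torus_measure" for k
    using E by (rule N_family_sets)
  have D_sets: "D \<in> sets torus_measure"
    unfolding D_def using A N_family_sets by blast
  have \<epsilon>: "(\<lambda>k. emeasure torus_measure (D - E k)) \<longlonglongrightarrow> 0"
    unfolding D_def E_def using finite_measure_torus A N_family_sets
    by (intro tendsto_emeasure_Diff_UN_lessThan) blast+
  have "L2_Cauchy_subseqs torus_measure (transported_family X D)"
  proof (rule L2_Cauchy_subseqs_approx[OF _ _ _ _ \<epsilon>, where G = "\<lambda>k. transported_family X (E k)"])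
    show "L2_Cauchy_subseqs torus_measure (transported_family X (E k))" for k
      using E N_family_iff[OF DL] by blast
    show "\<exists>g\<in>transported_family X (E k). L2_sqdist torus_measure f g \<le> emeasure torus_measure (D - E k)"
      if "f \<in> transported_family X D" for f k
    proof -
      from that obtain t where t: "t \<ge> 0" and f: "transported X D t f"
        by blast
      obtain g where g: "transported X (E k) t g"
        using transported_exists[OF DL t E_sets] .
      have "sym_diff D (E k) = D - E k"
        by (auto simp: D_def E_def)
      then have "L2_sqdist torus_measure f g = emeasure torus_measure (D - E k)"
        using L2_sqdist_transported[OF DL t f g D_sets E_sets] by simp
      then show ?thesis
        using t g by (intro bexI[where x = g]) auto
    qed
  qed (auto intro: transported_measurable)
  then show ?thesis
    using D_sets N_family_iff[OF DL] unfolding D_def by blast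
qed

theorem lemma4p2:
  fixes u X :: "real \<Rightarrow> real^'d \<Rightarrow> real^'d" and p :: real
  assumes "CARD('d) \<ge> 2"
    and "1 < p"
    and "Linf_W1p p u"
    and "div_free u"
    and "DL_flow u X"
  shows "sigma_algebra unit_cube (N_family X)"
  unfolding sigma_algebra_iff2
proof (intro conjI ballI allI impI)
  show "N_family X \<subseteq> Pow unit_cube"
    using N_family_sets sets.sets_into_space by fastforce
  show "{} \<in> N_family X"
    using \<open>DL_flow u X\<close> by (rule N_family_empty)
  show "unit_cube - D \<in> N_family X" if "D \<in> N_family X" for D
    using \<open>DL_flow u X\<close> that by (rule N_family_compl)
  show "(\<Union>i. A i) \<in> N_family X" if "range A \<subseteq> N_family X" for A :: "nat \<Rightarrow> (real^'d) set"
    using \<open>DL_flow u X\<close> that by (intro N_family_UN) auto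
qed

end
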